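(* Let $\pi(m)=(1/2)^m$ for $m\in\mathbb{N}^+$ (and $\pi(m)=0$ otherwise), and let the proposal be $q(m,\{m+1\})=\theta=1-q(m,\{m-1\})$ for $m\in\mathbb{Z}$, with $\theta\in(0,1)$. Take $N=1$ and weights $W_{m,1}=(b-\varepsilon_m)\,\mathrm{Ber}(s_m)+\varepsilon_m$, where $b>1$, $\varepsilon_m=m^{-(3-(m \bmod 3))}$, $\mathrm{Ber}(s_m)$ is a Bernoulli random variable with parameter $s_m$, and $s_m=\frac{1-\varepsilon_m}{b-\varepsilon_m}$ so that $\mathbb{E}[W_{m,1}]=1$. Then for any $\theta\in(0,1)$ there exists $b>1$ such that the Markov chain generated by the noisy kernel $\tilde P_1$ is transient.
   Context: Noisy Metropolis–Hastings kernel $\tilde P_N$: from state $m$, propose $Y\sim q(m,\cdot)$, draw independent weights $W\sim Q_{m,N}$, $U\sim Q_{Y,N}$ (the laws of $W_{m,N}$, $W_{Y,N}$), and move to $Y$ with probability $\min\{1,\frac{\pi(Y)q(Y,m)}{\pi(m)q(m,Y)}\cdot\frac{U}{W}\}$, otherwise stay at $m$ (proposals outside $\mathbb{N}^+$ have $\pi(Y)=0$ and are rejected). *)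

theory Defs
  imports "HOL-Probability.Probability"
begin

definition target :: "int \<Rightarrow> real" where
  "target m = (if m \<ge> 1 then (1/2) ^ nat m else 0)"

definition prop_dens :: "real \<Rightarrow> int \<Rightarrow> int \<Rightarrow> real" where
  "prop_dens \<theta> m y = (if y = m + 1 then \<theta> else if y = m - 1 then 1 - \<theta> else 0)"

definition eps :: "int \<Rightarrow> real" where
  "eps m = 1 / (real_of_int m) ^ (3 - nat (m mod 3))"

definition sprob :: "real \<Rightarrow> int \<Rightarrow> real" where
  "sprob b m = (1 - eps m) / (b - eps m)"

definition weight_pmf :: "real \<Rightarrow> int \<Rightarrow> real pmf" where
  "weight_pmf b m = map_pmf (\<lambda>c. (b - eps m) * (if c then 1 else 0) + eps m) (bernoulli_pmf (sprob b m))"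

definition noisy_kernel :: "real \<Rightarrow> real \<Rightarrow> int \<Rightarrow> int pmf" where
  "noisy_kernel \<theta> b m =
     bernoulli_pmf \<theta> \<bind> (\<lambda>up.
       let y = (if up then m + 1 else m - 1) in
       if y < 1 then return_pmf m
       else weight_pmf b m \<bind> (\<lambda>w. weight_pmf b y \<bind> (\<lambda>u.
         bernoulli_pmf (min 1 ((target y * prop_dens \<theta> y m) / (target m * prop_dens \<theta> m y) * (u / w)))
           \<bind> (\<lambda>acc. return_pmf (if acc then y else m)))))"

text \<open>hit_prob K x n y: probability that the chain with kernel K started at y
  visits x at some time in {0..n}.\<close>
fun hit_prob :: "('a \<Rightarrow> 'a pmf) \<Rightarrow> 'a \<Rightarrow> nat \<Rightarrow> 'a \<Rightarrow> real" where
  "hit_prob K x 0 y = (if y = x then 1 else 0)"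
| "hit_prob K x (Suc n) y = (if y = x then 1 else measure_pmf.expectation (K y) (hit_prob K x n))"

text \<open>Return probability P_x(tau_x < infinity), tau_x = inf {n >= 1. X_n = x}.\<close>
definition return_prob :: "('a \<Rightarrow> 'a pmf) \<Rightarrow> 'a \<Rightarrow> real" where
  "return_prob K x = (SUP n. measure_pmf.expectation (K x) (hit_prob K x n))"

definition transient_state :: "('a \<Rightarrow> 'a pmf) \<Rightarrow> 'a \<Rightarrow> bool" where
  "transient_state K x \<longleftrightarrow> return_prob K x < 1"

definition transient_chain_pos :: "(int \<Rightarrow> int pmf) \<Rightarrow> bool" where
  "transient_chain_pos K \<longleftrightarrow> (\<forall>m \<ge> 1. transient_state K m)"

end

theory Submission
  imports Defs "HOL-Real_Asymp.Real_Asymp"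
begin

text \<open>
  The noisy chain is a nearest-neighbour walk, so a state x is transient as soon as the products
  of the ratios R m = P(m, m - 1) / P(m, m + 1) over m > x are summable: the normalised scale
  function is then a bounded superharmonic function that equals 1 at x and drops below 1 at x + 1.
  The weights eps m oscillate along the residues mod 3: eps (m + 1) / eps m \<rightarrow> \<infinity> unless
  m mod 3 = 2, and eps (m - 1) / eps m \<rightarrow> 0 unless m mod 3 = 0. In the first case an up-move
  drawing the small weights at both ends is always accepted; in the second a down-move needs one of
  the two weights to take the value b, which happens with probability at most 2 / b. With
  t = (1 - \<theta>) / \<theta> this gives, for large m, R m \<le> 4 t, 12 t / b, 12 t on the three residues,
  so every block of three consecutive ratios has product at most 576 t^3 / b < 1 once
  b > 576 t^3, and the products decay geometrically.
\<close>

lemma hit_prob_le_superharmonic: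
  fixes K :: "'a \<Rightarrow> 'a pmf" and f :: "'a \<Rightarrow> real"
  assumes fin: "\<And>y. finite (set_pmf (K y))"
    and nonneg: "\<And>y. 0 \<le> f y" and at_x: "f x = 1"
    and superharmonic: "\<And>y. y \<noteq> x \<Longrightarrow> measure_pmf.expectation (K y) f \<le> f y"
  shows "hit_prob K x n y \<le> f y"
proof (induction n arbitrary: y)
  case 0
  then show ?case using nonneg at_x by simp
next
  case (Suc n)
  show ?case
  proof (cases "y = x")
    case True
    then show ?thesis using at_x by simp
  next
    case False
    have "measure_pmf.expectation (K y) (hit_prob K x n) \<le> measure_pmf.expectation (K y) f"
      by (rule integral_mono) (auto intro: integrable_measure_pmf_finite fin Suc.IH)
    then show ?thesis using False superharmonic[OF False] by simp
  qed
qed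

lemma transient_state_if_superharmonic:
  fixes K :: "'a \<Rightarrow> 'a pmf" and f :: "'a \<Rightarrow> real"
  assumes fin: "\<And>y. finite (set_pmf (K y))"
    and nonneg: "\<And>y. 0 \<le> f y" and at_x: "f x = 1"
    and superharmonic: "\<And>y. y \<noteq> x \<Longrightarrow> measure_pmf.expectation (K y) f \<le> f y"
    and escape: "measure_pmf.expectation (K x) f < 1"
  shows "transient_state K x"
proof -
  have "measure_pmf.expectation (K x) (hit_prob K x n) \<le> measure_pmf.expectation (K x) f" for n
    by (rule integral_mono)
      (auto intro: integrable_measure_pmf_finite fin hit_prob_le_superharmonic[OF fin nonneg at_x superharmonic])
  then have "return_prob K x \<le> measure_pmf.expectation (K x) f"
    unfolding return_prob_def by (intro cSUP_least) auto
  then show ?thesis using escape unfolding transient_state_def by simp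
qed

lemma summable_if_eventually_contracting:
  fixes h :: "nat \<Rightarrow> real"
  assumes nonneg: "\<And>n. 0 \<le> h n" and "\<rho> < 1"
    and contracting: "\<And>n. N \<le> n \<Longrightarrow> h (n + p) \<le> \<rho> * h n"
  shows "summable h"
proof -
  define r where "r = max 0 \<rho>"
  define S where "S n = (\<Sum>i<n. h i)" for n
  have r: "0 \<le> r" "r < 1" using \<open>\<rho> < 1\<close> unfolding r_def by auto
  have S_mono: "S n \<le> S (n + k)" for n k
    unfolding S_def by (rule sum_mono2) (auto simp: nonneg)
  have recursion: "S (N + p + n) \<le> S (N + p) + r * S (N + n)" for n
  proof (induction n)
    case 0
    then show ?case using r by (simp add: S_def sum_nonneg nonneg)
  next
    case (Suc n)
    have "\<rho> * h (N + n) \<le> r * h (N + n)"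
      unfolding r_def using nonneg by (intro mult_right_mono) auto
    then have "h (N + n + p) \<le> r * h (N + n)" using contracting[of "N + n"] by simp
    then have "S (N + p + Suc n) \<le> S (N + p) + r * S (N + n) + r * h (N + n)"
      using Suc by (simp add: S_def add_ac)
    then show ?case by (simp add: S_def algebra_simps)
  qed
  have "S n \<le> S (N + p) / (1 - r)" for n
  proof -
    have "r * S (N + n) \<le> r * S (N + p + n)"
      using S_mono[of "N + n" p] r by (intro mult_left_mono) (auto simp: add_ac)
    then have "S (N + p + n) \<le> S (N + p) + r * S (N + p + n)" using recursion[of n] by simp
    then have "S (N + p + n) \<le> S (N + p) / (1 - r)" using r by (simp add: field_simps)
    moreover have "S n \<le> S (N + p + n)" using S_mono[of n "N + p"] by (simp add: add.commute)
    ultimately show ?thesis by linarith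
  qed
  then show ?thesis by (intro summableI_nonneg_bounded[OF nonneg]) (simp add: S_def)
qed

lemma summable_prod_if_block_bound:
  fixes R :: "int \<Rightarrow> real"
  assumes nonneg: "\<And>m. 0 \<le> R m" and "\<rho> < 1"
    and block: "\<And>m. M \<le> m \<Longrightarrow> R m * R (m + 1) * R (m + 2) \<le> \<rho>"
  shows "summable (\<lambda>n. \<Prod>i<n. R (x + int i + 1))"
proof (rule summable_if_eventually_contracting)
  show "0 \<le> (\<Prod>i<n. R (x + int i + 1))" for n by (simp add: prod_nonneg nonneg)
  show "(\<Prod>i<n + 3. R (x + int i + 1)) \<le> \<rho> * (\<Prod>i<n. R (x + int i + 1))" if "nat (M - x) \<le> n" for n
  proof -
    have "(\<Prod>i<n + 3. R (x + int i + 1))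
        = (\<Prod>i<n. R (x + int i + 1)) * (R (x + int n + 1) * R (x + int n + 1 + 1) * R (x + int n + 1 + 2))"
      by (simp add: numeral_3_eq_3 algebra_simps)
    also have "\<dots> \<le> (\<Prod>i<n. R (x + int i + 1)) * \<rho>"
      using that by (intro mult_left_mono block) (auto simp: prod_nonneg nonneg)
    finally show ?thesis by (simp add: mult.commute)
  qed
qed (fact \<open>\<rho> < 1\<close>)

lemma prod_three_consecutive_le:
  fixes R :: "int \<Rightarrow> real"
  assumes nonneg: "\<And>m. 0 \<le> R m"
    and bounds: "\<And>m. M \<le> m \<Longrightarrow>
      (m mod 3 = 0 \<longrightarrow> R m \<le> A) \<and> (m mod 3 = 1 \<longrightarrow> R m \<le> B) \<and> (m mod 3 = 2 \<longrightarrow> R m \<le> C)"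
    and "M \<le> m"
  shows "R m * R (m + 1) * R (m + 2) \<le> A * B * C"
proof -
  have prod_le: "x * y * z \<le> X * Y * Z" if "0 \<le> x" "x \<le> X" "0 \<le> y" "y \<le> Y" "0 \<le> z" "z \<le> Z"
    for x y z X Y Z :: real
    using that by (intro mult_mono) (auto intro: order_trans)
  note bound = bounds[of m] bounds[of "m + 1"] bounds[of "m + 2"]
  have "m mod 3 = 0 \<and> (m + 1) mod 3 = 1 \<and> (m + 2) mod 3 = 2
    \<or> m mod 3 = 1 \<and> (m + 1) mod 3 = 2 \<and> (m + 2) mod 3 = 0
    \<or> m mod 3 = 2 \<and> (m + 1) mod 3 = 0 \<and> (m + 2) mod 3 = 1"
    by presburger
  then consider "m mod 3 = 0" "(m + 1) mod 3 = 1" "(m + 2) mod 3 = 2"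
    | "m mod 3 = 1" "(m + 1) mod 3 = 2" "(m + 2) mod 3 = 0"
    | "m mod 3 = 2" "(m + 1) mod 3 = 0" "(m + 2) mod 3 = 1"
    by blast
  then show ?thesis
  proof cases
    case 1
    then show ?thesis using bound \<open>M \<le> m\<close> nonneg by (intro prod_le) auto
  next
    case 2
    then have "R m * R (m + 1) * R (m + 2) \<le> B * C * A"
      using bound \<open>M \<le> m\<close> nonneg by (intro prod_le) auto
    then show ?thesis by (simp add: mult_ac)
  next
    case 3
    then have "R m * R (m + 1) * R (m + 2) \<le> C * A * B"
      using bound \<open>M \<le> m\<close> nonneg by (intro prod_le) auto
    then show ?thesis by (simp add: mult_ac)
  qed
qed

definition down_up_ratio :: "(int \<Rightarrow> int pmf) \<Rightarrow> int \<Rightarrow> real" where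
  "down_up_ratio K m = pmf (K m) (m - 1) / pmf (K m) (m + 1)"

lemma down_up_ratio_nonneg: "0 \<le> down_up_ratio K m"
  unfolding down_up_ratio_def by simp

lemma expectation_nearest_neighbour:
  fixes p :: "int pmf"
  assumes "set_pmf p \<subseteq> {m - 1, m, m + 1}"
  shows "measure_pmf.expectation p g
    = g m + (g (m - 1) - g m) * pmf p (m - 1) + (g (m + 1) - g m) * pmf p (m + 1)"
proof -
  have expectation: "measure_pmf.expectation p g
      = g (m - 1) * pmf p (m - 1) + g m * pmf p m + g (m + 1) * pmf p (m + 1)" for g
    using assms by (subst integral_measure_pmf_real[where A = "{m - 1, m, m + 1}"]) auto
  from expectation[of "\<lambda>_. 1"] have total: "pmf p m = 1 - pmf p (m - 1) - pmf p (m + 1)" by simp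
  show ?thesis unfolding expectation total by (simp add: algebra_simps)
qed

lemma down_up_ratio_le:
  assumes "pmf (K m) (m - 1) \<le> D" "0 < U" "U \<le> pmf (K m) (m + 1)"
  shows "down_up_ratio K m \<le> D / U"
  unfolding down_up_ratio_def using assms by (intro frac_le) (auto intro: order_trans[OF pmf_nonneg])

lemma transient_state_nearest_neighbour:
  fixes K :: "int \<Rightarrow> int pmf"
  assumes supp: "\<And>m. set_pmf (K m) \<subseteq> {m - 1, m, m + 1}"
    and up: "\<And>m. x \<le> m \<Longrightarrow> 0 < pmf (K m) (m + 1)"
    and summable: "summable (\<lambda>n. \<Prod>i<n. down_up_ratio K (x + int i + 1))"
  shows "transient_state K x"
proof -
  define h where "h n = (\<Prod>i<n. down_up_ratio K (x + int i + 1))" for n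
  define S where "S n = (\<Sum>i<n. h i)" for n
  define \<delta> where "\<delta> = 1 / (1 + suminf h)"
  define f where "f m = 1 - \<delta> * S (nat (m - x))" for m
  \<comment> \<open>a rescaled scale function: constant below x and harmonic above x\<close>
  have h_nonneg: "0 \<le> h n" for n unfolding h_def by (simp add: prod_nonneg down_up_ratio_nonneg)
  have "0 \<le> suminf h" using summable h_nonneg unfolding h_def by (intro suminf_nonneg) auto
  then have \<delta>: "0 < \<delta>" "\<delta> * (1 + suminf h) = 1" unfolding \<delta>_def by auto
  have S: "S n \<le> suminf h" for n
    unfolding S_def using summable h_nonneg unfolding h_def by (auto intro: sum_le_suminf)
  have f_nonneg: "0 \<le> f m" for m
  proof -
    have "S (nat (m - x)) \<le> 1 + suminf h" using S[of "nat (m - x)"] by linarith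
    then have "\<delta> * S (nat (m - x)) \<le> \<delta> * (1 + suminf h)" using \<delta> by (intro mult_left_mono) auto
    then show ?thesis unfolding f_def using \<delta> by simp
  qed
  have f_below: "f m = 1" if "m \<le> x" for m using that unfolding f_def S_def by simp
  have drift: "measure_pmf.expectation (K m) f
      = f m + (f (m - 1) - f m) * pmf (K m) (m - 1) + (f (m + 1) - f m) * pmf (K m) (m + 1)" for m
    by (rule expectation_nearest_neighbour[OF supp])
  show ?thesis
  proof (rule transient_state_if_superharmonic[where f = f])
    show "finite (set_pmf (K y))" for y by (rule finite_subset[OF supp]) auto
    show "0 \<le> f y" for y by (rule f_nonneg)
    show "f x = 1" by (rule f_below) simp
    show "measure_pmf.expectation (K x) f < 1"
      using drift[of x] f_below[of x] f_below[of "x - 1"] up[of x] \<delta>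
      by (simp add: f_def S_def h_def)
  next
    fix y assume "y \<noteq> x"
    show "measure_pmf.expectation (K y) f \<le> f y"
    proof (cases "y < x")
      case True
      then show ?thesis using drift[of y] f_below[of y] f_below[of "y - 1"] f_below[of "y + 1"] by simp
    next
      case False
      define k where "k = nat (y - x - 1)"
      have y: "y = x + int k + 1" using False \<open>y \<noteq> x\<close> unfolding k_def by simp
      have "nat (y - x) = Suc k" "nat (y + 1 - x) = Suc (Suc k)" "nat (y - 1 - x) = k"
        using y by simp_all
      then have up_diff: "f (y + 1) - f y = - \<delta> * h (Suc k)" and down_diff: "f (y - 1) - f y = \<delta> * h k"
        unfolding f_def S_def by (simp_all add: algebra_simps)
      have "measure_pmf.expectation (K y) f
          = f y + \<delta> * (h k * pmf (K y) (y - 1) - h (Suc k) * pmf (K y) (y + 1))"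
        unfolding drift[of y] up_diff down_diff by (simp add: algebra_simps)
      moreover have "h (Suc k) * pmf (K y) (y + 1) = h k * pmf (K y) (y - 1)"
        using up[of y] y unfolding h_def down_up_ratio_def by simp
      ultimately show ?thesis by simp
    qed
  qed
qed

lemma eps_pos: "1 \<le> m \<Longrightarrow> 0 < eps m"
  unfolding eps_def by simp

lemma eps_le_inverse:
  assumes "1 \<le> m"
  shows "eps m \<le> 1 / real_of_int m"
proof -
  have "real_of_int m \<le> real_of_int m ^ (3 - nat (m mod 3))"
    using assms by (intro self_le_power) (auto simp: nat_less_iff)
  then show ?thesis unfolding eps_def using assms by (intro divide_left_mono) auto
qed

lemma eps_le_one:
  assumes "1 \<le> m"
  shows "eps m \<le> 1"
proof -
  have "1 / real_of_int m \<le> 1" using assms by simp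
  then show ?thesis using eps_le_inverse[OF assms] by linarith
qed

lemma sprob_le: "1 \<le> m \<Longrightarrow> 1 < b \<Longrightarrow> sprob b m \<le> 1 / b"
  using eps_pos[of m] eps_le_one[of m] unfolding sprob_def by (simp add: field_simps)

lemma sprob_less_one:
  assumes "1 \<le> m" "1 < b"
  shows "sprob b m < 1"
proof -
  have "1 / b < 1" using assms by simp
  then show ?thesis using sprob_le[OF assms] by linarith
qed

lemma sprob_nonneg: "1 \<le> m \<Longrightarrow> 1 < b \<Longrightarrow> 0 \<le> sprob b m"
  using eps_pos[of m] eps_le_one[of m] unfolding sprob_def by simp

lemma sprob_ge:
  assumes "2 \<le> m" "1 < b"
  shows "1 / (2 * b) \<le> sprob b m"
proof -
  have "1 / real_of_int m \<le> 1 / 2" using assms by (simp add: field_simps)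
  then have "eps m \<le> 1 / 2" using eps_le_inverse[of m] assms by linarith
  then have "(1 / 2) / b \<le> (1 - eps m) / (b - eps m)"
    using eps_pos[of m] assms by (intro frac_le) auto
  then show ?thesis unfolding sprob_def by simp
qed

lemma expectation_weight_pmf:
  assumes "1 \<le> m" "1 < b"
  shows "measure_pmf.expectation (weight_pmf b m) F = sprob b m * F b + (1 - sprob b m) * F (eps m)"
  using sprob_nonneg[OF assms] sprob_less_one[OF assms] unfolding weight_pmf_def by simp

lemma eps_tendsto_0: "(eps \<longlongrightarrow> 0) at_top"
proof (rule tendsto_sandwich)
  show "\<forall>\<^sub>F m in at_top. 0 \<le> eps m"
    using eventually_ge_at_top[of "1::int"] by eventually_elim (simp add: eps_pos less_imp_le)
  show "\<forall>\<^sub>F m in at_top. eps m \<le> 1 / real_of_int m"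
    using eventually_ge_at_top[of "1::int"] by eventually_elim (rule eps_le_inverse)
  show "((\<lambda>m::int. 1 / real_of_int m) \<longlongrightarrow> 0) at_top" by real_asymp
qed simp

lemma eps_ratio_up_eventually:
  "\<forall>\<^sub>F m in at_top. m mod 3 \<noteq> 2 \<longrightarrow> C \<le> eps (m + 1) / eps m"
proof -
  have "filterlim (\<lambda>m::int. (1 / real_of_int (m + 1) ^ 2) / (1 / real_of_int m ^ 3)) at_top at_top"
    "filterlim (\<lambda>m::int. (1 / real_of_int (m + 1)) / (1 / real_of_int m ^ 2)) at_top at_top"
    by real_asymp+
  then have "\<forall>\<^sub>F m in at_top. C \<le> (1 / real_of_int (m + 1) ^ 2) / (1 / real_of_int m ^ 3)
      \<and> C \<le> (1 / real_of_int (m + 1)) / (1 / real_of_int m ^ 2)"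
    unfolding filterlim_at_top by (intro eventually_conj) auto
  then show ?thesis
  proof (rule eventually_mono, intro impI)
    fix m :: int
    assume "m mod 3 \<noteq> 2"
    then have "m mod 3 = 0 \<and> (m + 1) mod 3 = 1 \<or> m mod 3 = 1 \<and> (m + 1) mod 3 = 2" by presburger
    then show "C \<le> (1 / real_of_int (m + 1) ^ 2) / (1 / real_of_int m ^ 3)
        \<and> C \<le> (1 / real_of_int (m + 1)) / (1 / real_of_int m ^ 2) \<Longrightarrow> C \<le> eps (m + 1) / eps m"
      by (auto simp: eps_def)
  qed
qed

lemma eps_ratio_down_eventually:
  assumes "0 < C"
  shows "\<forall>\<^sub>F m in at_top. m mod 3 \<noteq> 0 \<longrightarrow> eps (m - 1) / eps m \<le> C"
proof -
  have "((\<lambda>m::int. (1 / real_of_int (m - 1) ^ 3) / (1 / real_of_int m ^ 2)) \<longlongrightarrow> 0) at_top"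
    "((\<lambda>m::int. (1 / real_of_int (m - 1) ^ 2) / (1 / real_of_int m)) \<longlongrightarrow> 0) at_top"
    by real_asymp+
  then have "\<forall>\<^sub>F m in at_top. (1 / real_of_int (m - 1) ^ 3) / (1 / real_of_int m ^ 2) < C
      \<and> (1 / real_of_int (m - 1) ^ 2) / (1 / real_of_int m) < C"
    using assms by (intro eventually_conj order_tendstoD(2)) auto
  then show ?thesis
  proof (rule eventually_mono, intro impI)
    fix m :: int
    assume "m mod 3 \<noteq> 0"
    then have "m mod 3 = 1 \<and> (m - 1) mod 3 = 0 \<or> m mod 3 = 2 \<and> (m - 1) mod 3 = 1" by presburger
    then show "(1 / real_of_int (m - 1) ^ 3) / (1 / real_of_int m ^ 2) < C
        \<and> (1 / real_of_int (m - 1) ^ 2) / (1 / real_of_int m) < C \<Longrightarrow> eps (m - 1) / eps m \<le> C"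
      by (auto simp: eps_def)
  qed
qed

lemma set_pmf_noisy_kernel: "set_pmf (noisy_kernel \<theta> b m) \<subseteq> {m - 1, m, m + 1}"
  unfolding noisy_kernel_def Let_def by (auto split: if_splits)

definition mh_ratio :: "real \<Rightarrow> int \<Rightarrow> int \<Rightarrow> real" where
  "mh_ratio \<theta> m y = target y * prop_dens \<theta> y m / (target m * prop_dens \<theta> m y)"

definition accept_prob :: "real \<Rightarrow> real \<Rightarrow> int \<Rightarrow> int \<Rightarrow> real" where
  "accept_prob \<theta> b m y = measure_pmf.expectation (weight_pmf b m) (\<lambda>w.
     measure_pmf.expectation (weight_pmf b y) (\<lambda>u. min 1 (mh_ratio \<theta> m y * (u / w))))"

lemma mh_ratio_nonneg: "0 \<le> \<theta> \<Longrightarrow> \<theta> \<le> 1 \<Longrightarrow> 0 \<le> mh_ratio \<theta> m y"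
  unfolding mh_ratio_def target_def prop_dens_def by simp

lemma mh_ratio_up:
  assumes "1 \<le> m" "0 < \<theta>" "\<theta> < 1"
  shows "mh_ratio \<theta> m (m + 1) = (1 - \<theta>) / (2 * \<theta>)"
proof -
  have "nat (m + 1) = Suc (nat m)" using assms by simp
  then show ?thesis using assms unfolding mh_ratio_def target_def prop_dens_def by (simp add: field_simps)
qed

lemma mh_ratio_down:
  assumes "2 \<le> m" "0 < \<theta>" "\<theta> < 1"
  shows "mh_ratio \<theta> m (m - 1) = 2 * \<theta> / (1 - \<theta>)"
proof -
  have "nat m = Suc (nat (m - 1))" using assms by simp
  then show ?thesis using assms unfolding mh_ratio_def target_def prop_dens_def by (simp add: field_simps)
qed

lemma pmf_accept_step:
  assumes "y \<noteq> m" "0 \<le> r" "1 < b" "1 \<le> m" "1 \<le> y"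
  shows "pmf (weight_pmf b m \<bind> (\<lambda>w. weight_pmf b y \<bind> (\<lambda>u.
      bernoulli_pmf (min 1 (r * (u / w))) \<bind> (\<lambda>acc. return_pmf (if acc then y else m))))) y
    = measure_pmf.expectation (weight_pmf b m) (\<lambda>w.
        measure_pmf.expectation (weight_pmf b y) (\<lambda>u. min 1 (r * (u / w))))"
proof -
  have accept: "pmf (bernoulli_pmf (min 1 a) \<bind> (\<lambda>acc. return_pmf (if acc then y else m))) y = min 1 a"
    if "0 \<le> a" for a
    using that \<open>y \<noteq> m\<close> by (simp add: pmf_bind)
  show ?thesis
    using assms eps_pos[of m] eps_pos[of y]
    by (simp add: pmf_bind expectation_weight_pmf accept del: min_less_iff_conj)
qed

lemma pmf_noisy_kernel_neighbour:
  assumes \<theta>: "0 < \<theta>" "\<theta> < 1" and "1 < b" "1 \<le> m" "1 \<le> y" and y: "y = m + 1 \<or> y = m - 1"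
  shows "pmf (noisy_kernel \<theta> b m) y = prop_dens \<theta> m y * accept_prob \<theta> b m y"
proof -
  define step where "step z = (if z < 1 then return_pmf m
    else weight_pmf b m \<bind> (\<lambda>w. weight_pmf b z \<bind> (\<lambda>u.
      bernoulli_pmf (min 1 (mh_ratio \<theta> m z * (u / w))) \<bind> (\<lambda>acc. return_pmf (if acc then z else m)))))"
    for z
  have kernel: "noisy_kernel \<theta> b m = bernoulli_pmf \<theta> \<bind> (\<lambda>up. step (if up then m + 1 else m - 1))"
    unfolding noisy_kernel_def step_def mh_ratio_def Let_def ..
  have miss: "pmf (step z) y = 0" if "z \<noteq> y" for z
    using that y unfolding step_def by (auto simp: pmf_eq_0_set_pmf)
  have "y \<noteq> m" using y by auto
  then have hit: "pmf (step y) y = accept_prob \<theta> b m y"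
    using assms pmf_accept_step[of y m "mh_ratio \<theta> m y" b] mh_ratio_nonneg[of \<theta> m y]
    unfolding step_def accept_prob_def by simp
  show ?thesis
    using y \<theta> hit miss[of "m - 1"] miss[of "m + 1"] unfolding kernel pmf_bind
    by (auto simp: prop_dens_def)
qed

lemma convex_combination_bounds:
  fixes s a c :: real
  assumes "0 \<le> s" "s \<le> 1" "0 \<le> a" "a \<le> 1" "0 \<le> c" "c \<le> 1"
  shows "0 \<le> s * a + (1 - s) * c" "s * a + (1 - s) * c \<le> 1"
    and "s * a \<le> s * a + (1 - s) * c" "(1 - s) * c \<le> s * a + (1 - s) * c"
    and "s * a + (1 - s) * c \<le> s + c"
proof -
  have "0 \<le> s * a" "s * a \<le> s" "0 \<le> (1 - s) * c" "(1 - s) * c \<le> 1 - s" "(1 - s) * c \<le> c"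
    using assms by (auto intro: mult_nonneg_nonneg mult_left_le mult_left_le_one_le)
  then show "0 \<le> s * a + (1 - s) * c" "s * a + (1 - s) * c \<le> 1"
    "s * a \<le> s * a + (1 - s) * c" "(1 - s) * c \<le> s * a + (1 - s) * c"
    "s * a + (1 - s) * c \<le> s + c"
    by linarith+
qed

lemma accept_prob_bounds:
  assumes "0 \<le> \<theta>" "\<theta> \<le> 1" "1 < b" "1 \<le> m" "1 \<le> y"
  defines "r \<equiv> mh_ratio \<theta> m y"
  shows "accept_prob \<theta> b m y \<le> 1"
    and "accept_prob \<theta> b m y \<le> sprob b m + sprob b y + min 1 (r * (eps y / eps m))"
    and "(1 - sprob b m) * ((1 - sprob b y) * min 1 (r * (eps y / eps m))) \<le> accept_prob \<theta> b m y"
    and "(1 - sprob b m) * (sprob b y * min 1 (r * (b / eps m))) \<le> accept_prob \<theta> b m y"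
proof -
  define a where "a w u = min 1 (r * (u / w))" for w u
  define s where "s = sprob b m"
  define t where "t = sprob b y"
  define inner where "inner w = t * a w b + (1 - t) * a w (eps y)" for w
  have st: "0 \<le> s" "s \<le> 1" "0 \<le> t" "t \<le> 1"
    using sprob_nonneg[of m b] sprob_less_one[of m b] sprob_nonneg[of y b] sprob_less_one[of y b] assms
    unfolding s_def t_def by auto
  have a: "0 \<le> a w u" "a w u \<le> 1" if "0 < w" "0 < u" for w u
    using that assms mh_ratio_nonneg[of \<theta> m y] unfolding a_def r_def by auto
  have pos: "0 < b" "0 < eps m" "0 < eps y" using assms eps_pos[of m] eps_pos[of y] by auto
  have accept: "accept_prob \<theta> b m y = s * inner b + (1 - s) * inner (eps m)"
    using assms unfolding accept_prob_def inner_def a_def r_def s_def t_def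
    by (simp add: expectation_weight_pmf)
  have inner_bounds: "0 \<le> inner w" "inner w \<le> 1" "t * a w b \<le> inner w"
    "(1 - t) * a w (eps y) \<le> inner w" "inner w \<le> t + a w (eps y)" if "0 < w" for w
    using convex_combination_bounds[OF st(3,4) a[OF that pos(1)] a[OF that pos(3)]]
    unfolding inner_def by auto
  note outer_bounds = convex_combination_bounds[OF st(1,2) inner_bounds(1,2)[OF pos(1)]
      inner_bounds(1,2)[OF pos(2)], folded accept]
  show "accept_prob \<theta> b m y \<le> 1"
    using outer_bounds(2) .
  show "accept_prob \<theta> b m y \<le> sprob b m + sprob b y + min 1 (r * (eps y / eps m))"
    using outer_bounds(5) inner_bounds(5)[OF pos(2)] unfolding a_def s_def t_def by linarith
  show "(1 - sprob b m) * ((1 - sprob b y) * min 1 (r * (eps y / eps m))) \<le> accept_prob \<theta> b m y"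
    using outer_bounds(4) inner_bounds(4)[OF pos(2)] st unfolding a_def s_def t_def
    by (meson diff_ge_0_iff_ge mult_left_mono order_trans)
  show "(1 - sprob b m) * (sprob b y * min 1 (r * (b / eps m))) \<le> accept_prob \<theta> b m y"
    using outer_bounds(4) inner_bounds(3)[OF pos(2)] st unfolding a_def s_def t_def
    by (meson diff_ge_0_iff_ge mult_left_mono order_trans)
qed

lemma pmf_noisy_kernel_up:
  assumes "0 < \<theta>" "\<theta> < 1" "1 < b" "1 \<le> m"
  shows "pmf (noisy_kernel \<theta> b m) (m + 1) = \<theta> * accept_prob \<theta> b m (m + 1)"
  using pmf_noisy_kernel_neighbour[of \<theta> b m "m + 1"] assms by (simp add: prop_dens_def)

lemma pmf_noisy_kernel_down:
  assumes "0 < \<theta>" "\<theta> < 1" "1 < b" "2 \<le> m"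
  shows "pmf (noisy_kernel \<theta> b m) (m - 1) = (1 - \<theta>) * accept_prob \<theta> b m (m - 1)"
  using pmf_noisy_kernel_neighbour[of \<theta> b m "m - 1"] assms by (simp add: prop_dens_def)

lemma pmf_noisy_kernel_up_pos:
  assumes "0 < \<theta>" "\<theta> < 1" "1 < b" "1 \<le> m"
  shows "0 < pmf (noisy_kernel \<theta> b m) (m + 1)"
proof -
  have "0 < min 1 ((1 - \<theta>) / (2 * \<theta>) * (eps (m + 1) / eps m))"
    using assms eps_pos[of m] eps_pos[of "m + 1"] by simp
  then have "0 < (1 - sprob b m) * ((1 - sprob b (m + 1)) * min 1 ((1 - \<theta>) / (2 * \<theta>) * (eps (m + 1) / eps m)))"
    using sprob_less_one[of m b] sprob_less_one[of "m + 1" b] assms by simp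
  also have "\<dots> \<le> accept_prob \<theta> b m (m + 1)"
    using accept_prob_bounds(3)[of \<theta> b m "m + 1"] assms mh_ratio_up[of m \<theta>] by simp
  finally have "0 < accept_prob \<theta> b m (m + 1)" .
  then show ?thesis using pmf_noisy_kernel_up[OF assms] assms by simp
qed

lemma pmf_noisy_kernel_up_ge_of_eps_ratio:
  assumes "0 < \<theta>" "\<theta> < 1" "2 \<le> b" "1 \<le> m"
    and ratio: "1 \<le> (1 - \<theta>) / (2 * \<theta>) * (eps (m + 1) / eps m)"
  shows "\<theta> / 4 \<le> pmf (noisy_kernel \<theta> b m) (m + 1)"
proof -
  have half: "1 / b \<le> 1 / 2" and b: "1 < b" using assms by (simp_all add: field_simps)
  have "1 \<le> m + 1" using assms by simp
  then have "1 / 2 \<le> 1 - sprob b m" "1 / 2 \<le> 1 - sprob b (m + 1)"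
    using sprob_le[OF assms(4) b] sprob_le[OF _ b, of "m + 1"] half by linarith+
  then have "1 / 2 * (1 / 2 * 1) \<le> (1 - sprob b m) * ((1 - sprob b (m + 1)) * 1)"
    using assms by (intro mult_mono) auto
  also have "\<dots> \<le> accept_prob \<theta> b m (m + 1)"
    using accept_prob_bounds(3)[of \<theta> b m "m + 1"] assms mh_ratio_up[of m \<theta>] ratio by simp
  finally show ?thesis using pmf_noisy_kernel_up[of \<theta> b m] assms by simp
qed

lemma pmf_noisy_kernel_up_ge_of_eps_small:
  assumes "0 < \<theta>" "\<theta> < 1" "2 \<le> b" "1 \<le> m"
    and small: "eps m \<le> b * ((1 - \<theta>) / (2 * \<theta>))"
  shows "\<theta> / (4 * b) \<le> pmf (noisy_kernel \<theta> b m) (m + 1)"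
proof -
  have "1 \<le> (1 - \<theta>) / (2 * \<theta>) * (b / eps m)"
    using small eps_pos[of m] assms by (simp add: field_simps)
  moreover have half: "1 / b \<le> 1 / 2" and b: "1 < b" using assms by (simp_all add: field_simps)
  then have "1 / 2 \<le> 1 - sprob b m"
    using sprob_le[OF assms(4) b] by linarith
  moreover have "1 / (2 * b) \<le> sprob b (m + 1)" "0 \<le> sprob b (m + 1)"
    using sprob_ge[of "m + 1" b] sprob_nonneg[of "m + 1" b] assms by simp_all
  ultimately have "1 / 2 * (1 / (2 * b) * 1) \<le> (1 - sprob b m) * (sprob b (m + 1) * 1)"
    using assms by (intro mult_mono) auto
  also have "\<dots> \<le> accept_prob \<theta> b m (m + 1)"
    using accept_prob_bounds(4)[of \<theta> b m "m + 1"] assms mh_ratio_up[of m \<theta>]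
      \<open>1 \<le> (1 - \<theta>) / (2 * \<theta>) * (b / eps m)\<close> by simp
  finally have "\<theta> * (1 / (4 * b)) \<le> \<theta> * accept_prob \<theta> b m (m + 1)"
    using assms by (intro mult_left_mono) auto
  then show ?thesis using pmf_noisy_kernel_up[of \<theta> b m] assms by simp
qed

lemma pmf_noisy_kernel_down_le:
  assumes "0 < \<theta>" "\<theta> < 1" "1 < b" "2 \<le> m"
  shows "pmf (noisy_kernel \<theta> b m) (m - 1) \<le> 1 - \<theta>"
  using accept_prob_bounds(1)[of \<theta> b m "m - 1"] pmf_noisy_kernel_down[OF assms] assms
  by (simp add: mult_left_le)

lemma pmf_noisy_kernel_down_le_of_eps_ratio:
  assumes "0 < \<theta>" "\<theta> < 1" "1 < b" "2 \<le> m"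
    and ratio: "2 * \<theta> / (1 - \<theta>) * (eps (m - 1) / eps m) \<le> 1 / b"
  shows "pmf (noisy_kernel \<theta> b m) (m - 1) \<le> 3 * (1 - \<theta>) / b"
proof -
  have "min 1 (2 * \<theta> / (1 - \<theta>) * (eps (m - 1) / eps m)) \<le> 1 / b"
    by (rule min.coboundedI2[OF ratio])
  moreover have "sprob b m \<le> 1 / b" "sprob b (m - 1) \<le> 1 / b"
    using sprob_le[of m b] sprob_le[of "m - 1" b] assms by simp_all
  moreover have "accept_prob \<theta> b m (m - 1)
      \<le> sprob b m + sprob b (m - 1) + min 1 (2 * \<theta> / (1 - \<theta>) * (eps (m - 1) / eps m))"
    using accept_prob_bounds(2)[of \<theta> b m "m - 1"] mh_ratio_down[of m \<theta>] assms by simp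
  ultimately have "accept_prob \<theta> b m (m - 1) \<le> 3 / b" by linarith
  then have "(1 - \<theta>) * accept_prob \<theta> b m (m - 1) \<le> (1 - \<theta>) * (3 / b)"
    using assms by (intro mult_left_mono) auto
  moreover have "(1 - \<theta>) * (3 / b) = 3 * (1 - \<theta>) / b" by simp
  ultimately show ?thesis using pmf_noisy_kernel_down[OF assms(1-4)] by linarith
qed

lemma down_up_ratio_noisy_kernel_le:
  assumes "0 < \<theta>" "\<theta> < 1" "2 \<le> b" "2 \<le> m"
    and eps_small: "eps m \<le> b * ((1 - \<theta>) / (2 * \<theta>))"
    and up_ratio: "m mod 3 \<noteq> 2 \<Longrightarrow> 1 \<le> (1 - \<theta>) / (2 * \<theta>) * (eps (m + 1) / eps m)"
    and down_ratio: "m mod 3 \<noteq> 0 \<Longrightarrow> 2 * \<theta> / (1 - \<theta>) * (eps (m - 1) / eps m) \<le> 1 / b"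
  defines "t \<equiv> (1 - \<theta>) / \<theta>"
  shows "(m mod 3 = 0 \<longrightarrow> down_up_ratio (noisy_kernel \<theta> b) m \<le> 4 * t)
    \<and> (m mod 3 = 1 \<longrightarrow> down_up_ratio (noisy_kernel \<theta> b) m \<le> 12 * t / b)
    \<and> (m mod 3 = 2 \<longrightarrow> down_up_ratio (noisy_kernel \<theta> b) m \<le> 12 * t)"
proof -
  let ?K = "noisy_kernel \<theta> b"
  have m: "1 \<le> m" "1 < b" using assms by auto
  have up_big: "\<theta> / 4 \<le> pmf (?K m) (m + 1)" if "m mod 3 \<noteq> 2"
    using assms m up_ratio[OF that] by (intro pmf_noisy_kernel_up_ge_of_eps_ratio) auto
  have up_small: "\<theta> / (4 * b) \<le> pmf (?K m) (m + 1)"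
    using assms m eps_small by (intro pmf_noisy_kernel_up_ge_of_eps_small) auto
  have down_small: "pmf (?K m) (m - 1) \<le> 3 * (1 - \<theta>) / b" if "m mod 3 \<noteq> 0"
    using assms m down_ratio[OF that] by (intro pmf_noisy_kernel_down_le_of_eps_ratio) auto
  have down: "pmf (?K m) (m - 1) \<le> 1 - \<theta>"
    using assms m by (intro pmf_noisy_kernel_down_le) auto
  have pos: "0 < \<theta> / 4" "0 < \<theta> / (4 * b)" using assms by simp_all
  have "(1 - \<theta>) / (\<theta> / 4) = 4 * t" "3 * (1 - \<theta>) / b / (\<theta> / 4) = 12 * t / b"
    "3 * (1 - \<theta>) / b / (\<theta> / (4 * b)) = 12 * t"
    using assms m unfolding t_def by (auto simp: field_simps)
  moreover have "down_up_ratio ?K m \<le> (1 - \<theta>) / (\<theta> / 4)" if "m mod 3 = 0"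
    using that down up_big pos by (intro down_up_ratio_le) auto
  moreover have "down_up_ratio ?K m \<le> 3 * (1 - \<theta>) / b / (\<theta> / 4)" if "m mod 3 = 1"
    using that down_small up_big pos by (intro down_up_ratio_le) auto
  moreover have "down_up_ratio ?K m \<le> 3 * (1 - \<theta>) / b / (\<theta> / (4 * b))" if "m mod 3 = 2"
    using that down_small up_small pos by (intro down_up_ratio_le) auto
  ultimately show ?thesis by simp
qed

lemma down_up_ratio_noisy_kernel_eventually:
  assumes "0 < \<theta>" "\<theta> < 1" "2 \<le> b"
  defines "t \<equiv> (1 - \<theta>) / \<theta>"
  shows "\<forall>\<^sub>F m in at_top.
      (m mod 3 = 0 \<longrightarrow> down_up_ratio (noisy_kernel \<theta> b) m \<le> 4 * t)
    \<and> (m mod 3 = 1 \<longrightarrow> down_up_ratio (noisy_kernel \<theta> b) m \<le> 12 * t / b)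
    \<and> (m mod 3 = 2 \<longrightarrow> down_up_ratio (noisy_kernel \<theta> b) m \<le> 12 * t)"
proof -
  define c where "c = (1 - \<theta>) / (2 * \<theta>)"
  have c: "0 < c" "2 * \<theta> / (1 - \<theta>) = 1 / c" using assms unfolding c_def by auto
  have "0 < b * c" using c assms by simp
  have "\<forall>\<^sub>F m in at_top. 2 \<le> m \<and> eps m < b * c
      \<and> (m mod 3 \<noteq> 2 \<longrightarrow> 1 / c \<le> eps (m + 1) / eps m)
      \<and> (m mod 3 \<noteq> 0 \<longrightarrow> eps (m - 1) / eps m \<le> c / b)"
    using eventually_ge_at_top[of "2::int"] order_tendstoD(2)[OF eps_tendsto_0 \<open>0 < b * c\<close>]
      eps_ratio_up_eventually[of "1 / c"] eps_ratio_down_eventually[of "c / b"] c assms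
    by (intro eventually_conj) auto
  then show ?thesis
  proof eventually_elim
    case (elim m)
    show ?case unfolding t_def
    proof (rule down_up_ratio_noisy_kernel_le)
      assume "m mod 3 \<noteq> 2"
      then have "c * (1 / c) \<le> c * (eps (m + 1) / eps m)"
        using elim c by (intro mult_left_mono) auto
      then show "1 \<le> (1 - \<theta>) / (2 * \<theta>) * (eps (m + 1) / eps m)"
        using c(1) unfolding c_def[symmetric] by simp
    next
      assume "m mod 3 \<noteq> 0"
      then have "1 / c * (eps (m - 1) / eps m) \<le> 1 / c * (c / b)"
        using elim c by (intro mult_left_mono) auto
      then show "2 * \<theta> / (1 - \<theta>) * (eps (m - 1) / eps m) \<le> 1 / b"
        using c(1) unfolding c(2) by simp
    qed (use elim assms in \<open>auto simp: c_def\<close>)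
  qed
qed

theorem proposition2p3:
  fixes \<theta> :: real
  assumes "0 < \<theta>" and "\<theta> < 1"
  shows "\<exists>b > 1. transient_chain_pos (noisy_kernel \<theta> b)"
proof -
  define t where "t = (1 - \<theta>) / \<theta>"
  define b where "b = 2 + 576 * t ^ 3"
  define K where "K = noisy_kernel \<theta> b"
  have "0 < t" using assms unfolding t_def by simp
  then have b: "2 \<le> b" "576 * t ^ 3 < b" unfolding b_def by simp_all
  obtain M where M: "\<And>m. M \<le> m \<Longrightarrow>
      (m mod 3 = 0 \<longrightarrow> down_up_ratio K m \<le> 4 * t)
    \<and> (m mod 3 = 1 \<longrightarrow> down_up_ratio K m \<le> 12 * t / b)
    \<and> (m mod 3 = 2 \<longrightarrow> down_up_ratio K m \<le> 12 * t)"
    using down_up_ratio_noisy_kernel_eventually[OF assms b(1)]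
    unfolding K_def t_def eventually_at_top_linorder by blast
  have "4 * t * (12 * t / b) * (12 * t) < 1"
    using b by (simp add: field_simps power3_eq_cube)
  then have summable: "summable (\<lambda>n. \<Prod>i<n. down_up_ratio K (x + int i + 1))" for x
    by (rule summable_prod_if_block_bound[OF down_up_ratio_nonneg _
          prod_three_consecutive_le[OF down_up_ratio_nonneg M]])
  have "transient_state K x" if "1 \<le> x" for x
    using set_pmf_noisy_kernel summable pmf_noisy_kernel_up_pos assms b(1) that
    unfolding K_def by (intro transient_state_nearest_neighbour) auto
  then show ?thesis using b(1) unfolding transient_chain_pos_def K_def by (intro exI[of _ b]) auto
qed

end
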